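(* Let $\delta>0$, $K\ge 2$, and let $\Lambda_1,\ldots,\Lambda_K\subset\mathbb{C}$ be regular QAM constellations with zero mean and minimum distances $d_{\min}(\Lambda_k)=\delta$ for all $k\in\{1,\ldots,K\}$. Then the superimposed constellation $$\Lambda=\Lambda_1+\sum_{k=2}^{K}2^{\frac{\sum_{i=1}^{k-1}\log|\Lambda_i|}{2}}\Lambda_k=\Big\{x_1+\sum_{k=2}^K 2^{\frac{\sum_{i=1}^{k-1}\log|\Lambda_i|}{2}}x_k : x_k\in\Lambda_k\Big\}$$ is a regular QAM with zero mean, $d_{\min}(\Lambda)=\delta$, and cardinality $|\Lambda|=\prod_{k=1}^K|\Lambda_k|$.
   Context: Logarithms are base 2, so $2^{\frac{\sum_{i<k}\log|\Lambda_i|}{2}}=\sqrt{\prod_{i<k}|\Lambda_i|}$. A regular QAM with cardinality $L^2$ ($L\ge 2$ an integer) and minimum distance $\delta$ is the set $\{(a+\mathrm{i}b)\delta : a,b\in\{-\tfrac{L-1}{2},-\tfrac{L-1}{2}+1,\ldots,\tfrac{L-1}{2}\}\}\subset\mathbb{C}$. The minimum distance $d_{\min}(\Lambda)$ is the smallest Euclidean distance between two distinct points of $\Lambda$. *)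

theory Defs
  imports "HOL-Analysis.Analysis"
begin

definition qam_coords :: "nat \<Rightarrow> real set" where
  "qam_coords L = {real j - (real L - 1) / 2 | j. j < L}"

definition qam :: "nat \<Rightarrow> real \<Rightarrow> complex set" where
  "qam L d = {(complex_of_real a + \<i> * complex_of_real b) * complex_of_real d
               | a b. a \<in> qam_coords L \<and> b \<in> qam_coords L}"

definition is_regular_qam :: "complex set \<Rightarrow> bool" where
  "is_regular_qam \<Lambda> \<longleftrightarrow> (\<exists>L d. L \<ge> 2 \<and> d > 0 \<and> \<Lambda> = qam L d)"

definition zero_mean :: "complex set \<Rightarrow> bool" where
  "zero_mean \<Lambda> \<longleftrightarrow> finite \<Lambda> \<and> \<Lambda> \<noteq> {} \<and> (\<Sum>x\<in>\<Lambda>. x) / of_nat (card \<Lambda>) = 0"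

definition d_min :: "complex set \<Rightarrow> real" where
  "d_min \<Lambda> = Inf {cmod (x - y) | x y. x \<in> \<Lambda> \<and> y \<in> \<Lambda> \<and> x \<noteq> y}"

definition superimpose :: "nat \<Rightarrow> (nat \<Rightarrow> complex set) \<Rightarrow> complex set" where
  "superimpose K \<Lambda> =
     {x 1 + (\<Sum>k=2..K. complex_of_real
               (2 powr ((\<Sum>i=1..k-1. log 2 (real (card (\<Lambda> i)))) / 2)) * x k)
      | x. \<forall>k\<in>{1..K}. x k \<in> \<Lambda> k}"

end

theory Submission
  imports Defs
begin

text \<open>A regular QAM of side L and spacing d is d times the grid C_L + i C_L with
  C_L = {j - (L - 1)/2 | j < L}. Mixed-radix digits j + N j' show C_N + N C_L = C_(N L), hence
  qam N d + N qam L d = qam (N L) d. If |Lambda_i| = L_i^2, the weight in front of Lambda_k is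
  exactly L_1 ... L_(k-1), so by induction on K the superposition is the regular QAM of side
  L_1 ... L_K and spacing delta. Zero mean (symmetry x -> -x), minimum distance and
  cardinality are then properties of a single regular QAM.\<close>

lemma qam_coords_eq_image: "qam_coords L = (\<lambda>j. real j - (real L - 1) / 2) ` {..<L}"
  unfolding qam_coords_def by auto

lemma card_qam_coords: "card (qam_coords L) = L"
  unfolding qam_coords_eq_image by (subst card_image) (auto simp: inj_on_def)

lemma qam_eq_image:
  "qam L d = (\<lambda>(a, b). Complex a b * of_real d) ` (qam_coords L \<times> qam_coords L)"
  unfolding qam_def by (auto simp: Complex_eq)

lemma mem_qam_iff:
  "x \<in> qam L d \<longleftrightarrow> (\<exists>a\<in>qam_coords L. \<exists>b\<in>qam_coords L. x = Complex a b * of_real d)"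
  unfolding qam_eq_image by auto

lemma finite_qam: "finite (qam L d)"
  unfolding qam_eq_image qam_coords_eq_image by simp

lemma card_qam: "d \<noteq> 0 \<Longrightarrow> card (qam L d) = L\<^sup>2"
  unfolding qam_eq_image
  by (subst card_image) (auto simp: inj_on_def card_cartesian_product card_qam_coords power2_eq_square)

lemma uminus_mem_qam_coords: "a \<in> qam_coords L \<Longrightarrow> - a \<in> qam_coords L"
proof -
  assume "a \<in> qam_coords L"
  then obtain j where j: "j < L" "a = real j - (real L - 1) / 2"
    unfolding qam_coords_def by auto
  then have "- a = real (L - 1 - j) - (real L - 1) / 2" "L - 1 - j < L"
    by (simp_all add: of_nat_diff)
  then show ?thesis unfolding qam_coords_def by blast
qed

lemma uminus_mem_qam: "x \<in> qam L d \<Longrightarrow> - x \<in> qam L d"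
proof -
  assume "x \<in> qam L d"
  then obtain a b where "a \<in> qam_coords L" "b \<in> qam_coords L" and x: "x = Complex a b * of_real d"
    unfolding mem_qam_iff by blast
  moreover have "- x = Complex (- a) (- b) * of_real d"
    unfolding x by (simp add: complex_eq_iff)
  ultimately show ?thesis
    unfolding mem_qam_iff using uminus_mem_qam_coords by blast
qed

lemma zero_mean_qam: "L \<ge> 1 \<Longrightarrow> zero_mean (qam L d)"
proof -
  assume "L \<ge> 1"
  have "(\<Sum>x\<in>qam L d. x) = (\<Sum>x\<in>qam L d. - x)"
    by (rule sum.reindex_bij_witness[of _ uminus uminus]) (auto simp: uminus_mem_qam)
  then have "(\<Sum>x\<in>qam L d. x) = 0"
    by (simp add: sum_negf)
  moreover have "qam L d \<noteq> {}"
    using \<open>L \<ge> 1\<close> card_qam_coords[of L] unfolding qam_eq_image by force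
  ultimately show ?thesis
    unfolding zero_mean_def using finite_qam by simp
qed

lemma qam_coords_dist_ge_1:
  assumes "a \<in> qam_coords L" "a' \<in> qam_coords L" "a \<noteq> a'"
  shows "1 \<le> \<bar>a - a'\<bar>"
proof -
  obtain j j' :: nat where "a - a' = real j - real j'" "j \<noteq> j'"
    using assms unfolding qam_coords_def by auto
  then show ?thesis by linarith
qed

lemma d_min_qam:
  assumes "L \<ge> 2" "d > 0"
  shows "d_min (qam L d) = d"
  unfolding d_min_def
proof (rule cInf_eq_minimum)
  define c where "c = (real L - 1) / 2"
  have "- c \<in> qam_coords L" "1 - c \<in> qam_coords L"
    unfolding qam_coords_def c_def using assms by (auto intro!: exI[of _ 0] exI[of _ 1])
  then have "Complex (1 - c) (- c) * of_real d \<in> qam L d" "Complex (- c) (- c) * of_real d \<in> qam L d"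
    unfolding mem_qam_iff by blast+
  moreover have "Complex (1 - c) (- c) * of_real d - Complex (- c) (- c) * of_real d = of_real d"
    by (simp add: complex_eq_iff algebra_simps)
  then have "Complex (1 - c) (- c) * of_real d \<noteq> Complex (- c) (- c) * of_real d"
    and "cmod (Complex (1 - c) (- c) * of_real d - Complex (- c) (- c) * of_real d) = d"
    using assms by auto
  ultimately show "d \<in> {cmod (x - y) |x y. x \<in> qam L d \<and> y \<in> qam L d \<and> x \<noteq> y}"
    unfolding mem_Collect_eq by metis
next
  fix z assume "z \<in> {cmod (x - y) |x y. x \<in> qam L d \<and> y \<in> qam L d \<and> x \<noteq> y}"
  then obtain a b a' b' where coords: "a \<in> qam_coords L" "b \<in> qam_coords L"
      "a' \<in> qam_coords L" "b' \<in> qam_coords L" "(a, b) \<noteq> (a', b')"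
    and z: "z = cmod ((Complex a b - Complex a' b') * of_real d)"
    unfolding qam_eq_image by (auto simp: algebra_simps)
  have "Complex a b - Complex a' b' = Complex (a - a') (b - b')"
    by (simp add: complex_eq_iff)
  then have "z = cmod (Complex (a - a') (b - b')) * d"
    using z assms by (simp add: norm_mult)
  moreover have "1 \<le> \<bar>a - a'\<bar> \<or> 1 \<le> \<bar>b - b'\<bar>"
    using coords qam_coords_dist_ge_1 by blast
  then have "1 \<le> cmod (Complex (a - a') (b - b'))"
    using abs_Re_le_cmod[of "Complex (a - a') (b - b')"] abs_Im_le_cmod[of "Complex (a - a') (b - b')"]
    by auto
  ultimately show "d \<le> z"
    using assms by simp
qed

lemma regular_qam_eq_qam_d_min:
  "is_regular_qam \<Lambda> \<Longrightarrow> \<exists>L\<ge>2. \<Lambda> = qam L (d_min \<Lambda>)"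
  unfolding is_regular_qam_def by (auto simp: d_min_qam)

lemma qam_coords_mult:
  "{a + real N * b | a b. a \<in> qam_coords N \<and> b \<in> qam_coords L} = qam_coords (N * L)"
proof (intro equalityI subsetI)
  fix z assume "z \<in> {a + real N * b | a b. a \<in> qam_coords N \<and> b \<in> qam_coords L}"
  then obtain j j' where j: "j < N" "j' < L"
    and z: "z = (real j - (real N - 1) / 2) + real N * (real j' - (real L - 1) / 2)"
    unfolding qam_coords_def by auto
  have "z = real (j + N * j') - (real (N * L) - 1) / 2"
    using z by (simp add: field_simps)
  moreover have "j + N * j' < N * L"
  proof -
    have "j + N * j' < N * (j' + 1)" using j by simp
    also have "\<dots> \<le> N * L" using j by (intro mult_le_mono2) simp
    finally show ?thesis .
  qed
  ultimately show "z \<in> qam_coords (N * L)"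
    unfolding qam_coords_def by blast
next
  fix z assume "z \<in> qam_coords (N * L)"
  then obtain m where m: "m < N * L" and z: "z = real m - (real (N * L) - 1) / 2"
    unfolding qam_coords_def by auto
  then have "N > 0" by (cases N) auto
  have "real m = real (m mod N) + real N * real (m div N)"
    by (metis mod_mult_div_eq of_nat_add of_nat_mult)
  then have "z = (real (m mod N) - (real N - 1) / 2) + real N * (real (m div N) - (real L - 1) / 2)"
    using z by (simp add: field_simps)
  moreover have "m mod N < N" "m div N < L"
    using m \<open>N > 0\<close> by (simp_all add: div_less_iff_less_mult mult.commute)
  ultimately show "z \<in> {a + real N * b | a b. a \<in> qam_coords N \<and> b \<in> qam_coords L}"
    unfolding qam_coords_def by blast
qed

lemma qam_mult:
  "{x + of_nat N * y | x y. x \<in> qam N d \<and> y \<in> qam L d} = qam (N * L) d"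
proof -
  have combine: "Complex a b * of_real d + of_nat N * (Complex a' b' * of_real d)
      = Complex (a + real N * a') (b + real N * b') * of_real d" for a b a' b'
    by (simp add: complex_eq_iff algebra_simps)
  show ?thesis
  proof (intro equalityI subsetI)
    fix z assume "z \<in> {x + of_nat N * y | x y. x \<in> qam N d \<and> y \<in> qam L d}"
    then obtain a a' b b' where "a \<in> qam_coords N" "a' \<in> qam_coords L" "b \<in> qam_coords N" "b' \<in> qam_coords L"
      and "z = Complex a b * of_real d + of_nat N * (Complex a' b' * of_real d)"
      unfolding mem_qam_iff by blast
    then show "z \<in> qam (N * L) d"
      unfolding mem_qam_iff qam_coords_mult[symmetric] combine by blast
  next
    fix z assume "z \<in> qam (N * L) d"
    then obtain a a' b b' where "a \<in> qam_coords N" "a' \<in> qam_coords L" "b \<in> qam_coords N" "b' \<in> qam_coords L"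
      and "z = Complex (a + real N * a') (b + real N * b') * of_real d"
      unfolding mem_qam_iff qam_coords_mult[symmetric] by blast
    then show "z \<in> {x + of_nat N * y | x y. x \<in> qam N d \<and> y \<in> qam L d}"
      unfolding mem_qam_iff combine[symmetric] by blast
  qed
qed

definition superimpose_weight :: "(nat \<Rightarrow> complex set) \<Rightarrow> nat \<Rightarrow> real" where
  "superimpose_weight \<Lambda> k = 2 powr ((\<Sum>i=1..k-1. log 2 (real (card (\<Lambda> i)))) / 2)"

lemma superimpose_1: "superimpose 1 \<Lambda> = \<Lambda> 1"
  unfolding superimpose_def by (auto intro: exI[of _ "\<lambda>_. _"])

lemma superimpose_Suc:
  assumes "K \<ge> 1"
  shows "superimpose (Suc K) \<Lambda> =
    {s + of_real (superimpose_weight \<Lambda> (Suc K)) * y | s y. s \<in> superimpose K \<Lambda> \<and> y \<in> \<Lambda> (Suc K)}"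
  (is "_ = ?rhs")
proof (intro equalityI subsetI)
  let ?sum = "\<lambda>K x. x 1 + (\<Sum>k=2..K. of_real (superimpose_weight \<Lambda> k) * x k)"
  have sum_Suc: "?sum (Suc K) x = ?sum K x + of_real (superimpose_weight \<Lambda> (Suc K)) * x (Suc K)" for x
    using assms by (simp add: algebra_simps)
  have mem_superimpose: "z \<in> superimpose K' \<Lambda> \<longleftrightarrow> (\<exists>x. z = ?sum K' x \<and> (\<forall>k\<in>{1..K'}. x k \<in> \<Lambda> k))"
    for z K' unfolding superimpose_def superimpose_weight_def by blast
  fix z
  show "z \<in> superimpose (Suc K) \<Lambda> \<Longrightarrow> z \<in> ?rhs"
    unfolding mem_superimpose sum_Suc by fastforce
  assume "z \<in> ?rhs"
  then obtain x y where x: "\<forall>k\<in>{1..K}. x k \<in> \<Lambda> k" and "y \<in> \<Lambda> (Suc K)"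
    and z: "z = ?sum K x + of_real (superimpose_weight \<Lambda> (Suc K)) * y"
    unfolding mem_superimpose by blast
  have "?sum K (x(Suc K := y)) = ?sum K x"
    using assms by (auto intro!: sum.cong)
  then have "z = ?sum (Suc K) (x(Suc K := y))"
    unfolding z sum_Suc by simp
  moreover have "\<forall>k\<in>{1..Suc K}. (x(Suc K := y)) k \<in> \<Lambda> k"
    using x \<open>y \<in> \<Lambda> (Suc K)\<close> by (auto simp: le_Suc_eq)
  ultimately show "z \<in> superimpose (Suc K) \<Lambda>"
    unfolding mem_superimpose by blast
qed

lemma powr_half_sum_log_squares:
  assumes "finite A" "\<And>i. i \<in> A \<Longrightarrow> x i > 0"
  shows "2 powr ((\<Sum>i\<in>A. log 2 ((x i)\<^sup>2)) / 2) = (\<Prod>i\<in>A. x i)"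
proof -
  have "(\<Sum>i\<in>A. log 2 ((x i)\<^sup>2)) / 2 = (\<Sum>i\<in>A. log 2 (x i))"
    using assms by (simp add: log_nat_power less_imp_le flip: sum_divide_distrib sum_distrib_left)
  then show ?thesis
    using assms by (simp add: powr_sum)
qed

lemma superimpose_weight_eq_prod:
  assumes "\<And>i. i \<in> {1..K} \<Longrightarrow> card (\<Lambda> i) = (L i)\<^sup>2 \<and> L i \<ge> 1"
  shows "superimpose_weight \<Lambda> (Suc K) = real (\<Prod>i=1..K. L i)"
proof -
  have "(\<Sum>i=1..K. log 2 (real (card (\<Lambda> i)))) = (\<Sum>i=1..K. log 2 ((real (L i))\<^sup>2))"
    using assms by (intro sum.cong) simp_all
  then have "superimpose_weight \<Lambda> (Suc K) = 2 powr ((\<Sum>i=1..K. log 2 ((real (L i))\<^sup>2)) / 2)"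
    unfolding superimpose_weight_def by simp
  also have "\<dots> = real (\<Prod>i=1..K. L i)"
    using assms by (subst powr_half_sum_log_squares) force+
  finally show ?thesis .
qed

lemma superimpose_qam:
  assumes "K \<ge> 1" "d \<noteq> 0" "\<And>k. k \<in> {1..K} \<Longrightarrow> \<Lambda> k = qam (L k) d \<and> L k \<ge> 1"
  shows "superimpose K \<Lambda> = qam (\<Prod>k=1..K. L k) d"
  using assms
proof (induction K rule: nat_induct_at_least)
  case base
  then show ?case using superimpose_1 by simp
next
  case (Suc K)
  have "superimpose_weight \<Lambda> (Suc K) = real (\<Prod>i=1..K. L i)"
    using Suc.prems card_qam[OF \<open>d \<noteq> 0\<close>] by (subst superimpose_weight_eq_prod) auto
  moreover have "superimpose K \<Lambda> = qam (\<Prod>k=1..K. L k) d"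
    using Suc by simp
  moreover have "\<Lambda> (Suc K) = qam (L (Suc K)) d"
    using Suc.prems by simp
  ultimately have "superimpose (Suc K) \<Lambda> =
      {s + of_nat (\<Prod>k=1..K. L k) * y | s y. s \<in> qam (\<Prod>k=1..K. L k) d \<and> y \<in> qam (L (Suc K)) d}"
    using superimpose_Suc[OF \<open>K \<ge> 1\<close>] by (simp only: of_real_of_nat_eq)
  also have "\<dots> = qam ((\<Prod>k=1..K. L k) * L (Suc K)) d"
    by (rule qam_mult)
  finally show ?case
    by simp
qed

theorem lemma2:
  fixes \<delta> :: real and K :: nat and \<Lambda> :: "nat \<Rightarrow> complex set"
  assumes "\<delta> > 0" and "K \<ge> 2"
    and "\<And>k. k \<in> {1..K} \<Longrightarrow> is_regular_qam (\<Lambda> k)"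
    and "\<And>k. k \<in> {1..K} \<Longrightarrow> zero_mean (\<Lambda> k)"
    and "\<And>k. k \<in> {1..K} \<Longrightarrow> d_min (\<Lambda> k) = \<delta>"
  shows "is_regular_qam (superimpose K \<Lambda>) \<and> zero_mean (superimpose K \<Lambda>)
         \<and> d_min (superimpose K \<Lambda>) = \<delta>
         \<and> card (superimpose K \<Lambda>) = (\<Prod>k=1..K. card (\<Lambda> k))"
proof -
  have "\<forall>k\<in>{1..K}. \<exists>L\<ge>2. \<Lambda> k = qam L \<delta>"
    using regular_qam_eq_qam_d_min assms(3,5) by metis
  then obtain L where L: "\<And>k. k \<in> {1..K} \<Longrightarrow> L k \<ge> 2 \<and> \<Lambda> k = qam (L k) \<delta>"
    by metis
  define N where "N = (\<Prod>k=1..K. L k)"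
  have superimpose_eq: "superimpose K \<Lambda> = qam N \<delta>"
    unfolding N_def using assms L by (intro superimpose_qam) force+
  have "L 1 dvd N" "N > 0"
    unfolding N_def using L assms(2) by (force intro!: dvd_prodI prod_pos)+
  then have "N \<ge> 2"
    using L[of 1] assms(2) by (meson atLeastAtMost_iff dvd_imp_le le_trans one_le_numeral order_refl)
  have "card (qam N \<delta>) = (\<Prod>k=1..K. (L k)\<^sup>2)"
    unfolding N_def using assms(1) by (simp add: card_qam prod_power_distrib)
  also have "\<dots> = (\<Prod>k=1..K. card (\<Lambda> k))"
    using L assms(1) by (intro prod.cong) (auto simp: card_qam)
  finally show ?thesis
    unfolding superimpose_eq is_regular_qam_def
    using \<open>N \<ge> 2\<close> assms(1) d_min_qam zero_mean_qam by auto
qed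

end
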